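(* Let $q > 2$ be an integer. A generalized quadrangle of order $(q, q^2-q)$ whose automorphism group acts transitively on its points does not possess an ovoid.
   Context: A generalized quadrangle of order $(s,t)$ consists of a set $P$ of points, a set $L$ of lines and an incidence relation such that every point lies on exactly $t+1$ lines, every line contains exactly $s+1$ points, and for every point $p$ and line $l$ not containing $p$ there is a unique point $p'$ on $l$ and a unique line $l'$ containing both $p$ and $p'$. Its point graph has vertex set $P$, two distinct points adjacent iff collinear. An ovoid is a Delsarte coclique of the point graph: a set of pairwise non-collinear points of size $\frac{ve^-}{e^- - k}$, where $v,k,e^-$ are the number of vertices, the valency, and the smallest eigenvalue of the point graph (for order $(q,q^2-q)$ this size is $q^3-q^2+1$); equivalently, a set of points meeting every line in exactly one point. *)

theory Defs
  imports Main
begin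

definition generalized_quadrangle ::
  "'p set \<Rightarrow> 'l set \<Rightarrow> ('p \<Rightarrow> 'l \<Rightarrow> bool) \<Rightarrow> nat \<Rightarrow> nat \<Rightarrow> bool" where
  "generalized_quadrangle P L I s t \<longleftrightarrow>
     P \<noteq> {} \<and>
     (\<forall>p\<in>P. card {l\<in>L. I p l} = t + 1) \<and>
     (\<forall>l\<in>L. card {p\<in>P. I p l} = s + 1) \<and>
     (\<forall>p\<in>P. \<forall>p'\<in>P. \<forall>l\<in>L. \<forall>l'\<in>L.
         p \<noteq> p' \<and> I p l \<and> I p' l \<and> I p l' \<and> I p' l' \<longrightarrow> l = l') \<and>
     (\<forall>p\<in>P. \<forall>l\<in>L. \<not> I p l \<longrightarrow>
         (\<exists>!(p', l'). p' \<in> P \<and> l' \<in> L \<and> I p' l \<and> I p l' \<and> I p' l'))"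

definition gq_automorphism ::
  "'p set \<Rightarrow> 'l set \<Rightarrow> ('p \<Rightarrow> 'l \<Rightarrow> bool) \<Rightarrow> ('p \<Rightarrow> 'p) \<Rightarrow> ('l \<Rightarrow> 'l) \<Rightarrow> bool" where
  "gq_automorphism P L I f g \<longleftrightarrow>
     bij_betw f P P \<and> bij_betw g L L \<and>
     (\<forall>p\<in>P. \<forall>l\<in>L. I (f p) (g l) \<longleftrightarrow> I p l)"

definition point_transitive ::
  "'p set \<Rightarrow> 'l set \<Rightarrow> ('p \<Rightarrow> 'l \<Rightarrow> bool) \<Rightarrow> bool" where
  "point_transitive P L I \<longleftrightarrow>
     (\<forall>x\<in>P. \<forall>y\<in>P. \<exists>f g. gq_automorphism P L I f g \<and> f x = y)"

definition ovoid :: "'p set \<Rightarrow> 'l set \<Rightarrow> ('p \<Rightarrow> 'l \<Rightarrow> bool) \<Rightarrow> 'p set \<Rightarrow> bool" where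
  "ovoid P L I Ov \<longleftrightarrow> Ov \<subseteq> P \<and> (\<forall>l\<in>L. \<exists>!p. p \<in> Ov \<and> I p l)"

end

theory Submission
  imports Defs
begin

text \<open>
  Write \<open>x\<^sup>\<bottom>\<close> for the set of points collinear with \<open>x\<close>. An ovoid \<open>O\<close> of a generalized
  quadrangle of order \<open>(s, t)\<close> has \<open>st + 1\<close> points and meets \<open>x\<^sup>\<bottom>\<close> in \<open>t + 1\<close> points for
  every point \<open>x\<close> off \<open>O\<close>. For \<open>t = s\<^sup>2 - s\<close>, counting the first two moments of
  \<open>|O \<inter> x\<^sup>\<bottom> \<inter> y\<^sup>\<bottom>|\<close> over the points \<open>y\<close> outside \<open>O \<union> x\<^sup>\<bottom>\<close> shows that its variance is
  zero: every such \<open>y\<close> sees exactly \<open>s\<close> points of \<open>O \<inter> x\<^sup>\<bottom>\<close>. Consequently two distinct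
  ovoids meet in exactly \<open>(s - 1)\<^sup>2\<close> points, and an ovoid avoiding two non-collinear
  points \<open>x, y\<close> meets \<open>x\<^sup>\<bottom> \<inter> y\<^sup>\<bottom>\<close> in \<open>s\<close> points.

  If the automorphism group is point-transitive, every point lies on the same number \<open>r\<close>
  of ovoids. Counting incidences between points and ovoids, between the points of a fixed
  ovoid and the ovoids, and between \<open>x\<^sup>\<bottom> \<inter> y\<^sup>\<bottom>\<close> and the ovoids gives \<open>n = (s + 1) r\<close>
  ovoids, \<open>r = s\<^sup>2 - 2s + 2\<close> and \<open>s | (t + 1) r\<close>; but \<open>(t + 1) r \<equiv> 2 (mod s)\<close>, so \<open>s \<le> 2\<close>.
\<close>

lemma double_counting:
  assumes "finite A" "finite B"
  shows "(\<Sum>a\<in>A. card {b\<in>B. R a b}) = (\<Sum>b\<in>B. card {a\<in>A. R a b})"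
proof -
  have "(\<Sum>a\<in>A. card {b\<in>B. R a b}) = (\<Sum>a\<in>A. \<Sum>b\<in>B. if R a b then 1 else 0)"
    using assms by (simp add: sum.inter_filter[symmetric])
  also have "\<dots> = (\<Sum>b\<in>B. \<Sum>a\<in>A. if R a b then 1 else 0)" by (rule sum.swap)
  also have "\<dots> = (\<Sum>b\<in>B. card {a\<in>A. R a b})"
    using assms by (simp add: sum.inter_filter[symmetric])
  finally show ?thesis .
qed

definition off_diagonal :: "'a set \<Rightarrow> ('a \<times> 'a) set" where
  "off_diagonal S = {(a, b). a \<in> S \<and> b \<in> S \<and> a \<noteq> b}"

lemma finite_off_diagonal: "finite S \<Longrightarrow> finite (off_diagonal S)"
  unfolding off_diagonal_def by (rule finite_subset[of _ "S \<times> S"]) auto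

lemma card_off_diagonal:
  assumes "finite S"
  shows "card (off_diagonal S) + card S = card S ^ 2"
proof -
  have "off_diagonal S = S \<times> S - (\<lambda>a. (a, a)) ` S"
    unfolding off_diagonal_def by auto
  moreover have "card ((\<lambda>a. (a, a)) ` S) = card S"
    by (rule card_image) (auto intro: inj_onI)
  moreover have "card (S \<times> S - (\<lambda>a. (a, a)) ` S) = card (S \<times> S) - card ((\<lambda>a. (a, a)) ` S)"
    by (rule card_Diff_subset) (use assms in auto)
  moreover have "card S \<le> card S ^ 2" by (simp add: power2_eq_square)
  ultimately show ?thesis by (simp add: card_cartesian_product power2_eq_square)
qed

lemma moments_eq_imp_constant:
  fixes m :: "'a \<Rightarrow> nat"
  assumes "finite Y"
    and sum1: "(\<Sum>y\<in>Y. m y) = card Y * c"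
    and sum2: "(\<Sum>y\<in>Y. (m y)^2) = card Y * c^2"
    and "y \<in> Y"
  shows "m y = c"
proof -
  have "(\<Sum>y\<in>Y. (int (m y) - int c)^2)
      = int (\<Sum>y\<in>Y. (m y)^2) - 2 * int c * int (\<Sum>y\<in>Y. m y) + int (card Y) * (int c)^2"
    by (simp add: power2_eq_square algebra_simps sum_subtractf sum.distrib sum_distrib_left)
  also have "\<dots> = 0"
    unfolding sum1 sum2 by (simp add: power2_eq_square)
  finally have "(\<Sum>y\<in>Y. (int (m y) - int c)^2) = 0" .
  then show ?thesis
    using sum_nonneg_eq_0_iff[OF \<open>finite Y\<close>, of "\<lambda>y. (int (m y) - int c)^2"] \<open>y \<in> Y\<close> by simp
qed

locale gq =
  fixes P :: "'p set" and L :: "'l set" and I :: "'p \<Rightarrow> 'l \<Rightarrow> bool" and s t :: nat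
  assumes gq: "generalized_quadrangle P L I s t"
begin

definition collinear :: "'p \<Rightarrow> 'p \<Rightarrow> bool" where
  "collinear x y \<longleftrightarrow> (\<exists>l\<in>L. I x l \<and> I y l)"

definition lines_through :: "'p \<Rightarrow> 'l set" where
  "lines_through x = {l\<in>L. I x l}"

definition points_on :: "'l \<Rightarrow> 'p set" where
  "points_on l = {p\<in>P. I p l}"

definition perp :: "'p \<Rightarrow> 'p set" where
  "perp x = {y\<in>P. collinear x y}"

lemma P_nonempty: "P \<noteq> {}"
  using gq unfolding generalized_quadrangle_def by blast

lemma card_lines_through: "x \<in> P \<Longrightarrow> card (lines_through x) = t + 1"
  using gq unfolding generalized_quadrangle_def lines_through_def by blast

lemma card_points_on: "l \<in> L \<Longrightarrow> card (points_on l) = s + 1"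
  using gq unfolding generalized_quadrangle_def points_on_def by blast

lemma finite_lines_through: "x \<in> P \<Longrightarrow> finite (lines_through x)"
  by (rule card_ge_0_finite) (simp add: card_lines_through)

lemma finite_points_on: "l \<in> L \<Longrightarrow> finite (points_on l)"
  by (rule card_ge_0_finite) (simp add: card_points_on)

lemma ex_line_through:
  assumes "x \<in> P" shows "\<exists>l\<in>L. I x l"
proof -
  have "lines_through x \<noteq> {}" using card_lines_through[OF assms] by auto
  then show ?thesis unfolding lines_through_def by blast
qed

lemma line_unique:
  "\<lbrakk>x \<in> P; y \<in> P; x \<noteq> y; l \<in> L; l' \<in> L; I x l; I y l; I x l'; I y l'\<rbrakk> \<Longrightarrow> l = l'"
  using gq unfolding generalized_quadrangle_def by blast

lemma collinear_sym: "collinear x y \<Longrightarrow> collinear y x"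
  unfolding collinear_def by blast

lemma collinear_refl: "x \<in> P \<Longrightarrow> collinear x x"
  using ex_line_through unfolding collinear_def by blast

lemma ex1_projection:
  assumes "y \<in> P" "l \<in> L" "\<not> I y l"
  shows "\<exists>!p. p \<in> P \<and> I p l \<and> collinear y p"
proof -
  have "\<exists>!(p, m). p \<in> P \<and> m \<in> L \<and> I p l \<and> I y m \<and> I p m"
    using gq assms unfolding generalized_quadrangle_def by blast
  then show ?thesis
    unfolding collinear_def by (auto simp: Ex1_def split: prod.splits)
qed

definition proj :: "'p \<Rightarrow> 'l \<Rightarrow> 'p" where
  "proj y l = (THE p. p \<in> P \<and> I p l \<and> collinear y p)"

lemma proj:
  assumes "y \<in> P" "l \<in> L" "\<not> I y l"
  shows "proj y l \<in> P" "I (proj y l) l" "collinear y (proj y l)"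
  using theI'[OF ex1_projection[OF assms]] unfolding proj_def by auto

lemma proj_unique:
  assumes "y \<in> P" "l \<in> L" "\<not> I y l" "p \<in> P" "I p l" "collinear y p"
  shows "p = proj y l"
  using the1_equality[OF ex1_projection[OF assms(1-3)]] assms(4-6) unfolding proj_def by auto

lemma triangle_on_line:
  assumes "x \<in> P" "y \<in> P" "z \<in> P" "x \<noteq> y"
    and "collinear x y" "collinear x z" "collinear y z"
  shows "\<exists>l\<in>L. I x l \<and> I y l \<and> I z l"
proof -
  obtain l where l: "l \<in> L" "I x l" "I y l"
    using \<open>collinear x y\<close> unfolding collinear_def by blast
  have "I z l"
  proof (rule ccontr)
    assume "\<not> I z l"
    then have "x = proj z l" "y = proj z l"
      using proj_unique[of z l] assms l collinear_sym by blast+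
    then show False using \<open>x \<noteq> y\<close> by simp
  qed
  with l show ?thesis by blast
qed

lemma card_UN_lines_through:
  assumes "w \<in> P" "M \<subseteq> lines_through w"
    and sub: "\<And>m. m \<in> M \<Longrightarrow> A m \<subseteq> points_on m - {w}"
    and card: "\<And>m. m \<in> M \<Longrightarrow> card (A m) = k"
  shows "card (\<Union>m\<in>M. A m) = card M * k"
proof -
  have M: "m \<in> L" "I w m" if "m \<in> M" for m
    using that assms(2) unfolding lines_through_def by auto
  have "finite M"
    using assms(2) finite_lines_through[OF assms(1)] by (rule finite_subset)
  moreover have "\<forall>m\<in>M. finite (A m)"
    using sub M(1) finite_points_on finite_subset by blast
  moreover have "A m \<inter> A m' = {}" if mM: "m \<in> M" "m' \<in> M" "m \<noteq> m'" for m m'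
  proof (rule ccontr)
    assume "A m \<inter> A m' \<noteq> {}"
    then obtain p where "p \<in> points_on m - {w}" "p \<in> points_on m' - {w}"
      using sub mM by blast
    then have "m = m'"
      using line_unique[OF _ assms(1), of p m m'] M mM unfolding points_on_def by blast
    with \<open>m \<noteq> m'\<close> show False ..
  qed
  ultimately have "card (\<Union>m\<in>M. A m) = (\<Sum>m\<in>M. card (A m))"
    by (intro card_UN_disjoint) auto
  then show ?thesis using card by simp
qed

lemma perp_eq_UN: "x \<in> P \<Longrightarrow> perp x = (\<Union>l\<in>lines_through x. points_on l)"
  unfolding perp_def lines_through_def points_on_def collinear_def by blast

lemma perp_self: "x \<in> P \<Longrightarrow> x \<in> perp x"
  unfolding perp_def using collinear_refl by simp

lemma perp_sym: "x \<in> P \<Longrightarrow> y \<in> perp x \<Longrightarrow> x \<in> perp y"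
  unfolding perp_def using collinear_sym by blast

lemma card_points_on_Diff: "l \<in> L \<Longrightarrow> x \<in> points_on l \<Longrightarrow> card (points_on l - {x}) = s"
  using card_points_on finite_points_on by simp

lemma finite_perp:
  assumes "x \<in> P" shows "finite (perp x)"
  unfolding perp_eq_UN[OF assms]
proof (rule finite_UN_I)
  show "finite (lines_through x)" using finite_lines_through[OF assms] .
  show "finite (points_on l)" if "l \<in> lines_through x" for l
    using that finite_points_on unfolding lines_through_def by blast
qed

lemma card_perp:
  assumes "x \<in> P" shows "card (perp x) = 1 + s * (t + 1)"
proof -
  have "perp x - {x} = (\<Union>l\<in>lines_through x. points_on l - {x})"
    using perp_eq_UN[OF assms] by blast
  moreover have "card (\<Union>l\<in>lines_through x. points_on l - {x}) = card (lines_through x) * s"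
  proof (rule card_UN_lines_through[OF assms order.refl])
    fix l assume "l \<in> lines_through x"
    then show "card (points_on l - {x}) = s"
      using assms card_points_on_Diff unfolding lines_through_def points_on_def by auto
  qed auto
  ultimately have "card (perp x - {x}) = (t + 1) * s"
    using card_lines_through[OF assms] by simp
  then have "card (perp x) = Suc ((t + 1) * s)"
    using card.remove[OF finite_perp[OF assms] perp_self[OF assms]] by simp
  then show ?thesis by simp
qed

lemma finite_P: "finite P"
proof -
  obtain x where x: "x \<in> P" using P_nonempty by blast
  obtain l where l: "l \<in> L" "I x l" using ex_line_through[OF x] by blast
  have "P \<subseteq> (\<Union>w\<in>perp x. perp w)"
  proof
    fix y assume y: "y \<in> P"
    show "y \<in> (\<Union>w\<in>perp x. perp w)"
    proof (cases "I y l")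
      case True
      then have "collinear x y" using l unfolding collinear_def by blast
      then have "y \<in> perp x" "y \<in> perp y"
        using y perp_self[OF y] unfolding perp_def by simp_all
      then show ?thesis by blast
    next
      case False
      note p = proj[OF y l(1) False]
      have "collinear x (proj y l)" using l p(2) unfolding collinear_def by blast
      then have "proj y l \<in> perp x" "y \<in> perp (proj y l)"
        using p(1,3) y collinear_sym[OF p(3)] unfolding perp_def by simp_all
      then show ?thesis by blast
    qed
  qed
  moreover have "finite (\<Union>w\<in>perp x. perp w)"
    using finite_perp[OF x] finite_perp unfolding perp_def by blast
  ultimately show ?thesis by (rule finite_subset)
qed

lemma card_perp_Int_perp:
  assumes "x \<in> P" "z \<in> P" "\<not> collinear x z"
  shows "card (perp x \<inter> perp z) = t + 1"
proof -
  have m: "m \<in> L" "I z m" "\<not> I x m" if "m \<in> lines_through z" for m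
    using that assms(3) unfolding lines_through_def collinear_def by blast+
  have "bij_betw (proj x) (lines_through z) (perp x \<inter> perp z)"
  proof (rule bij_betw_imageI)
    show "inj_on (proj x) (lines_through z)"
    proof (rule inj_onI)
      fix m m' assume mm: "m \<in> lines_through z" "m' \<in> lines_through z" "proj x m = proj x m'"
      have "proj x m \<noteq> z"
        using proj(3)[OF assms(1) m(1,3)[OF mm(1)]] assms(3) by auto
      then show "m = m'"
        using line_unique[OF proj(1)[OF assms(1) m(1,3)[OF mm(1)]] assms(2)]
          proj(2)[OF assms(1) m(1,3)[OF mm(1)]] proj(2)[OF assms(1) m(1,3)[OF mm(2)]]
          m[OF mm(1)] m[OF mm(2)] mm(3) by metis
    qed
    show "proj x ` lines_through z = perp x \<inter> perp z"
    proof
      show "proj x ` lines_through z \<subseteq> perp x \<inter> perp z"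
        using proj[OF assms(1)] m unfolding perp_def collinear_def by blast
      show "perp x \<inter> perp z \<subseteq> proj x ` lines_through z"
      proof
        fix w assume w: "w \<in> perp x \<inter> perp z"
        then obtain m where "m \<in> L" "I z m" "I w m"
          unfolding perp_def collinear_def by blast
        then have "m \<in> lines_through z" unfolding lines_through_def by blast
        moreover have "w = proj x m"
          using proj_unique[OF assms(1) m(1,3)[OF calculation]] w \<open>I w m\<close>
          unfolding perp_def by blast
        ultimately show "w \<in> proj x ` lines_through z" by blast
      qed
    qed
  qed
  then show ?thesis
    using bij_betw_same_card card_lines_through[OF assms(2)] by metis
qed

lemma perp_diff_perp_eq:
  assumes "x \<in> P" "w \<in> P" "x \<noteq> w" "l \<in> L" "I x l" "I w l"
  shows "perp w - perp x = (\<Union>m\<in>lines_through w - {l}. points_on m - {w})"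
proof
  have "w \<in> perp x" using assms unfolding perp_def collinear_def by blast
  show "perp w - perp x \<subseteq> (\<Union>m\<in>lines_through w - {l}. points_on m - {w})"
  proof
    fix y assume y: "y \<in> perp w - perp x"
    then obtain m where m: "m \<in> L" "I w m" "I y m" "y \<in> P"
      unfolding perp_def collinear_def by blast
    have "m \<noteq> l"
    proof
      assume "m = l"
      then have "y \<in> perp x" using m assms(5) unfolding perp_def collinear_def by blast
      with y show False by blast
    qed
    moreover have "y \<noteq> w" using y \<open>w \<in> perp x\<close> by blast
    ultimately show "y \<in> (\<Union>m\<in>lines_through w - {l}. points_on m - {w})"
      using m unfolding lines_through_def points_on_def by blast
  qed
  show "(\<Union>m\<in>lines_through w - {l}. points_on m - {w}) \<subseteq> perp w - perp x"
  proof
    fix y assume "y \<in> (\<Union>m\<in>lines_through w - {l}. points_on m - {w})"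
    then obtain m where m: "m \<in> L" "I w m" "m \<noteq> l" "y \<in> P" "I y m" "y \<noteq> w"
      unfolding lines_through_def points_on_def by blast
    have "\<not> I x m"
      using line_unique[OF assms(1-3,4) m(1) assms(5,6)] m(2,3) by blast
    have "y \<notin> perp x"
    proof
      assume "y \<in> perp x"
      then have "y = proj x m" "w = proj x m"
        using proj_unique[OF assms(1) m(1) \<open>\<not> I x m\<close>] m \<open>w \<in> perp x\<close>
        unfolding perp_def by blast+
      with m(6) show False by simp
    qed
    moreover have "y \<in> perp w" using m unfolding perp_def collinear_def by blast
    ultimately show "y \<in> perp w - perp x" by blast
  qed
qed

lemma card_perp_diff_perp:
  assumes "x \<in> P" "w \<in> perp x" "w \<noteq> x"
  shows "card (perp w - perp x) = s * t"
proof -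
  have w: "w \<in> P" using assms(2) unfolding perp_def by simp
  obtain l where l: "l \<in> L" "I x l" "I w l"
    using assms(2) unfolding perp_def collinear_def by blast
  have "card (\<Union>m\<in>lines_through w - {l}. points_on m - {w}) = card (lines_through w - {l}) * s"
  proof (rule card_UN_lines_through[OF w])
    fix m assume "m \<in> lines_through w - {l}"
    then show "card (points_on m - {w}) = s"
      using w card_points_on_Diff unfolding lines_through_def points_on_def by auto
  qed auto
  moreover have "card (lines_through w - {l}) = t"
    using card_lines_through[OF w] finite_lines_through[OF w] l
    unfolding lines_through_def by simp
  ultimately show ?thesis
    using perp_diff_perp_eq[OF assms(1) w assms(3)[symmetric] l] by simp
qed

lemma card_diff_perp:
  assumes "x \<in> P" shows "card (P - perp x) = s * s * t"
proof -
  let ?A = "P - perp x" and ?B = "perp x - {x}"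
  have "(\<Sum>y\<in>?A. card {w\<in>?B. w \<in> perp y}) = (\<Sum>w\<in>?B. card {y\<in>?A. w \<in> perp y})"
    using finite_P finite_perp[OF assms] by (intro double_counting) auto
  moreover have "card {w\<in>?B. w \<in> perp y} = t + 1" if "y \<in> ?A" for y
  proof -
    have "\<not> collinear x y" "y \<in> P" using that assms unfolding perp_def by auto
    moreover have "{w\<in>?B. w \<in> perp y} = perp x \<inter> perp y"
      using perp_sym[OF \<open>y \<in> P\<close>] that by blast
    ultimately show ?thesis using card_perp_Int_perp[OF assms] by simp
  qed
  moreover have "card {y\<in>?A. w \<in> perp y} = s * t" if "w \<in> ?B" for w
  proof -
    have "w \<in> P" using that unfolding perp_def by simp
    then have "{y\<in>?A. w \<in> perp y} = perp w - perp x"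
      using perp_sym[OF \<open>w \<in> P\<close>] perp_sym unfolding perp_def by blast
    then show ?thesis using card_perp_diff_perp[OF assms] that by simp
  qed
  moreover have "card ?B = s * (t + 1)"
    using card_perp[OF assms] finite_perp[OF assms] perp_self[OF assms] by simp
  ultimately have "card ?A * (t + 1) = (s * s * t) * (t + 1)"
    by (simp add: algebra_simps)
  then show ?thesis by (subst (asm) mult_right_cancel) simp_all
qed

lemma card_P: "card P = (s + 1) * (s * t + 1)"
proof -
  obtain x where x: "x \<in> P" using P_nonempty by blast
  have "perp x \<subseteq> P" unfolding perp_def by blast
  then have "card P = card (perp x) + card (P - perp x)"
    using card_Diff_subset[OF finite_perp[OF x]] card_mono[OF finite_P] by fastforce
  then show ?thesis
    using card_perp[OF x] card_diff_perp[OF x] by (simp add: algebra_simps)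
qed

lemma ovoid_subset: "ovoid P L I W \<Longrightarrow> W \<subseteq> P"
  unfolding ovoid_def by blast

lemma finite_ovoid: "ovoid P L I W \<Longrightarrow> finite W"
  using ovoid_subset finite_P finite_subset by blast

lemma ovoid_nonempty:
  assumes "ovoid P L I W" shows "W \<noteq> {}"
proof -
  obtain x where "x \<in> P" using P_nonempty by blast
  then obtain l where "l \<in> L" using ex_line_through by blast
  then show ?thesis using assms unfolding ovoid_def by blast
qed

lemma ovoid_Int_perp_of_mem:
  assumes W: "ovoid P L I W" and "x \<in> W"
  shows "W \<inter> perp x = {x}"
proof -
  have "y = x" if y: "y \<in> W" "y \<in> perp x" for y
  proof -
    obtain l where l: "l \<in> L" "I x l" "I y l"
      using y(2) unfolding perp_def collinear_def by blast
    then have "\<exists>!p. p \<in> W \<and> I p l" using W unfolding ovoid_def by blast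
    then show ?thesis using l \<open>x \<in> W\<close> \<open>y \<in> W\<close> by blast
  qed
  moreover have "x \<in> perp x"
    using assms ovoid_subset perp_self by blast
  ultimately show ?thesis using \<open>x \<in> W\<close> by blast
qed

lemma card_ovoid_Int_perp:
  assumes W: "ovoid P L I W" and "x \<in> P" "x \<notin> W"
  shows "card (W \<inter> perp x) = t + 1"
proof -
  have "W \<inter> perp x = (\<Union>l\<in>lines_through x. W \<inter> points_on l)"
    using perp_eq_UN[OF \<open>x \<in> P\<close>] by blast
  moreover have "card (\<Union>l\<in>lines_through x. W \<inter> points_on l) = card (lines_through x) * 1"
  proof (rule card_UN_lines_through[OF \<open>x \<in> P\<close> order.refl])
    fix l assume "l \<in> lines_through x"
    then have "\<exists>!p. p \<in> W \<and> I p l" using W unfolding ovoid_def lines_through_def by blast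
    then obtain p where "W \<inter> points_on l = {p}"
      using ovoid_subset[OF W] unfolding points_on_def by blast
    then show "card (W \<inter> points_on l) = 1" by simp
  qed (use \<open>x \<notin> W\<close> in auto)
  ultimately show ?thesis using card_lines_through[OF \<open>x \<in> P\<close>] by simp
qed

lemma card_ovoid:
  assumes W: "ovoid P L I W" shows "card W = s * t + 1"
proof -
  obtain a where a: "a \<in> W" using ovoid_nonempty[OF W] by blast
  have aP: "a \<in> P" using a ovoid_subset[OF W] by blast
  have Wa: "W \<inter> perp a = {a}" by (rule ovoid_Int_perp_of_mem[OF W a])
  let ?A = "W - {a}" and ?B = "perp a - {a}"
  have "(\<Sum>y\<in>?A. card {w\<in>?B. w \<in> perp y}) = (\<Sum>w\<in>?B. card {y\<in>?A. w \<in> perp y})"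
    using finite_ovoid[OF W] finite_perp[OF aP] by (intro double_counting) auto
  moreover have "card {w\<in>?B. w \<in> perp y} = t + 1" if y: "y \<in> ?A" for y
  proof -
    have "y \<in> P" "y \<notin> perp a" using y Wa ovoid_subset[OF W] by auto
    then have "\<not> collinear a y" "a \<notin> perp y"
      using perp_sym[OF \<open>y \<in> P\<close>] unfolding perp_def by auto
    moreover have "{w\<in>?B. w \<in> perp y} = perp a \<inter> perp y"
      using \<open>a \<notin> perp y\<close> by blast
    ultimately show ?thesis using card_perp_Int_perp[OF aP \<open>y \<in> P\<close>] by simp
  qed
  moreover have "card {y\<in>?A. w \<in> perp y} = t" if w: "w \<in> ?B" for w
  proof -
    have "w \<in> P" "w \<notin> W" using w Wa unfolding perp_def by auto
    have "{y\<in>?A. w \<in> perp y} = W \<inter> perp w - {a}"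
      using perp_sym[OF \<open>w \<in> P\<close>] perp_sym ovoid_subset[OF W] by blast
    moreover have "a \<in> W \<inter> perp w" using a perp_sym[OF aP] w by blast
    ultimately show ?thesis
      using card_ovoid_Int_perp[OF W \<open>w \<in> P\<close> \<open>w \<notin> W\<close>] finite_ovoid[OF W] by simp
  qed
  moreover have "card ?B = s * (t + 1)"
    using card_perp[OF aP] finite_perp[OF aP] perp_self[OF aP] by simp
  ultimately have "card ?A * (t + 1) = (s * t) * (t + 1)"
    by (simp add: algebra_simps)
  then have "card ?A = s * t" by (subst (asm) mult_right_cancel) simp_all
  then show ?thesis
    using card.remove[OF finite_ovoid[OF W] a] by simp
qed

lemma card_diff_ovoid_perp:
  assumes W: "ovoid P L I W" and x: "x \<in> P" "x \<notin> W"
  shows "card (P - W - perp x) + s * t = s * s * t + t"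
proof -
  have sub: "W \<union> perp x \<subseteq> P" using ovoid_subset[OF W] unfolding perp_def by blast
  have fin: "finite (W \<union> perp x)" using finite_ovoid[OF W] finite_perp[OF x(1)] by blast
  have "P - W - perp x = P - (W \<union> perp x)" by blast
  then have "card P = card (P - W - perp x) + card (W \<union> perp x)"
    using card_Diff_subset[OF fin sub] card_mono[OF finite_P sub] by simp
  moreover have "card (W \<union> perp x) + card (W \<inter> perp x) = card W + card (perp x)"
    using card_Un_Int[OF finite_ovoid[OF W] finite_perp[OF x(1)]] by simp
  ultimately show ?thesis
    using card_P card_ovoid[OF W] card_perp[OF x(1)] card_ovoid_Int_perp[OF W x]
    by (simp add: algebra_simps)
qed

lemma perp_Int_perp_diff_eq:
  assumes W: "ovoid P L I W" and x: "x \<in> P" "x \<notin> W"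
    and ab: "a \<in> W \<inter> perp x" "b \<in> W \<inter> perp x" "a \<noteq> b"
  shows "perp a \<inter> perp b - {x} = (P - W - perp x) \<inter> perp a \<inter> perp b"
proof
  have abP: "a \<in> P" "b \<in> P" using ab ovoid_subset[OF W] by auto
  have "b \<notin> perp a" using ovoid_Int_perp_of_mem[OF W IntD1[OF ab(1)]] ab by auto
  show "perp a \<inter> perp b - {x} \<subseteq> (P - W - perp x) \<inter> perp a \<inter> perp b"
  proof
    fix w assume w: "w \<in> perp a \<inter> perp b - {x}"
    then have wP: "w \<in> P" unfolding perp_def by blast
    have "w \<notin> W"
    proof
      assume "w \<in> W"
      then have "W \<inter> perp w = {w}" by (rule ovoid_Int_perp_of_mem[OF W])
      then have "a = w" "b = w"
        using w perp_sym[OF abP(1)] perp_sym[OF abP(2)] ab by blast+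
      with \<open>a \<noteq> b\<close> show False by simp
    qed
    moreover have "w \<notin> perp x"
    proof
      assume "w \<in> perp x"
      have line: "\<exists>l\<in>L. I x l \<and> I c l \<and> I w l" if c: "c \<in> W \<inter> perp x" "w \<in> perp c" for c
      proof (rule triangle_on_line[OF x(1)])
        show "c \<in> P" "x \<noteq> c" using c ovoid_subset[OF W] x(2) by auto
        show "w \<in> P" "collinear x c" "collinear x w" "collinear c w"
          using c \<open>w \<in> perp x\<close> wP unfolding perp_def by auto
      qed
      obtain l where l: "l \<in> L" "I x l" "I a l" "I w l" using line ab(1) w by blast
      obtain l' where l': "l' \<in> L" "I x l'" "I b l'" "I w l'" using line ab(2) w by blast
      have "x \<noteq> w" using w by blast
      then have "l = l'" using line_unique[OF x(1) wP _ l(1) l'(1) l(2,4) l'(2,4)] by blast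
      then have "b \<in> perp a" using l l' abP unfolding perp_def collinear_def by blast
      with \<open>b \<notin> perp a\<close> show False ..
    qed
    ultimately show "w \<in> (P - W - perp x) \<inter> perp a \<inter> perp b" using w wP by blast
  qed
  show "(P - W - perp x) \<inter> perp a \<inter> perp b \<subseteq> perp a \<inter> perp b - {x}"
    using perp_self[OF x(1)] by blast
qed

lemma sum_card_ovoid_perp_perp:
  assumes W: "ovoid P L I W" and x: "x \<in> P" "x \<notin> W"
  shows "(\<Sum>y\<in>P - W - perp x. card (W \<inter> perp x \<inter> perp y)) = (t + 1) * (s * t)"
proof -
  let ?T = "W \<inter> perp x" and ?Y = "P - W - perp x"
  have "(\<Sum>y\<in>?Y. card {a\<in>?T. a \<in> perp y}) = (\<Sum>a\<in>?T. card {y\<in>?Y. a \<in> perp y})"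
    using finite_P finite_ovoid[OF W] by (intro double_counting) auto
  moreover have "card {y\<in>?Y. a \<in> perp y} = s * t" if a: "a \<in> ?T" for a
  proof -
    have aP: "a \<in> P" using a ovoid_subset[OF W] by blast
    have Wa: "W \<inter> perp a = {a}" using ovoid_Int_perp_of_mem[OF W] a by blast
    have "{y\<in>?Y. a \<in> perp y} = perp a - perp x"
    proof
      show "{y\<in>?Y. a \<in> perp y} \<subseteq> perp a - perp x"
        using perp_sym by blast
      show "perp a - perp x \<subseteq> {y\<in>?Y. a \<in> perp y}"
      proof
        fix y assume y: "y \<in> perp a - perp x"
        then have "y \<in> P" "y \<noteq> a" using a unfolding perp_def by auto
        then show "y \<in> {y\<in>?Y. a \<in> perp y}" using y Wa perp_sym[OF aP] by auto
      qed
    qed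
    moreover have "a \<noteq> x" using a x(2) by blast
    ultimately show ?thesis using card_perp_diff_perp[OF x(1)] a by simp
  qed
  moreover have "{a\<in>?T. a \<in> perp y} = ?T \<inter> perp y" for y by blast
  ultimately show ?thesis using card_ovoid_Int_perp[OF W x] by simp
qed

lemma sum_card_off_diagonal_ovoid_perp_perp:
  assumes W: "ovoid P L I W" and x: "x \<in> P" "x \<notin> W"
  shows "(\<Sum>y\<in>P - W - perp x. card (off_diagonal (W \<inter> perp x \<inter> perp y))) = (t + 1) * t * t"
proof -
  let ?T = "W \<inter> perp x" and ?Y = "P - W - perp x"
  have finT: "finite ?T" using finite_ovoid[OF W] by blast
  have "(\<Sum>y\<in>?Y. card {p\<in>off_diagonal ?T. fst p \<in> perp y \<and> snd p \<in> perp y})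
      = (\<Sum>p\<in>off_diagonal ?T. card {y\<in>?Y. fst p \<in> perp y \<and> snd p \<in> perp y})"
    using finite_P finite_off_diagonal[OF finT] by (intro double_counting) auto
  moreover have "card {y\<in>?Y. fst p \<in> perp y \<and> snd p \<in> perp y} = t" if p: "p \<in> off_diagonal ?T" for p
  proof -
    obtain a b where ab: "p = (a, b)" "a \<in> ?T" "b \<in> ?T" "a \<noteq> b"
      using p unfolding off_diagonal_def by auto
    have abP: "a \<in> P" "b \<in> P" using ab ovoid_subset[OF W] by auto
    have "{y\<in>?Y. a \<in> perp y \<and> b \<in> perp y} = ?Y \<inter> perp a \<inter> perp b"
      using perp_sym[OF abP(1)] perp_sym[OF abP(2)] perp_sym unfolding perp_def by blast
    also have "\<dots> = perp a \<inter> perp b - {x}"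
      by (rule perp_Int_perp_diff_eq[OF W x ab(2-4), symmetric])
    finally have eq: "{y\<in>?Y. a \<in> perp y \<and> b \<in> perp y} = perp a \<inter> perp b - {x}" .
    have "\<not> collinear a b"
      using ovoid_Int_perp_of_mem[OF W IntD1[OF ab(2)]] ab abP unfolding perp_def by auto
    moreover have "x \<in> perp a \<inter> perp b" using ab perp_sym[OF x(1)] by blast
    ultimately show ?thesis
      unfolding ab(1) fst_conv snd_conv eq
      using card_perp_Int_perp[OF abP] finite_perp[OF abP(1)] by simp
  qed
  moreover have "off_diagonal (?T \<inter> perp y)
      = {p\<in>off_diagonal ?T. fst p \<in> perp y \<and> snd p \<in> perp y}" for y
    unfolding off_diagonal_def by auto
  moreover have "card (off_diagonal ?T) = (t + 1) * t"
    using card_off_diagonal[OF finT] card_ovoid_Int_perp[OF W x] by (simp add: power2_eq_square)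
  ultimately show ?thesis by simp
qed

end

locale gq_square = gq +
  assumes t_eq: "t = s^2 - s" and s_gt_1: "1 < s"
begin

lemma t_plus_s: "t + s = s * s"
  using t_eq s_gt_1 by (simp add: power2_eq_square)

lemma card_ovoid_Int_perp_perp:
  assumes W: "ovoid P L I W" and x: "x \<in> P" "x \<notin> W" and y: "y \<in> P - W - perp x"
  shows "card (W \<inter> perp x \<inter> perp y) = s"
proof -
  let ?Y = "P - W - perp x" and ?m = "\<lambda>y. card (W \<inter> perp x \<inter> perp y)"
  have "s * s * t = t * t + s * t" using t_plus_s by (metis add_mult_distrib mult.commute)
  then have cY: "card ?Y = t * (t + 1)"
    using card_diff_ovoid_perp[OF W x] by simp
  have "(\<Sum>y\<in>?Y. ?m y) = card ?Y * s"
    unfolding sum_card_ovoid_perp_perp[OF W x] cY by (simp add: algebra_simps)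
  moreover have "(\<Sum>y\<in>?Y. (?m y)^2) = card ?Y * s^2"
  proof -
    have "(?m y)^2 = card (off_diagonal (W \<inter> perp x \<inter> perp y)) + ?m y" for y
      using card_off_diagonal[of "W \<inter> perp x \<inter> perp y"] finite_ovoid[OF W] by simp
    then have "(\<Sum>y\<in>?Y. (?m y)^2) = (t + 1) * t * t + (t + 1) * (s * t)"
      using sum_card_off_diagonal_ovoid_perp_perp[OF W x] sum_card_ovoid_perp_perp[OF W x]
      by (simp add: sum.distrib)
    also have "\<dots> = t * (t + 1) * (t + s)" by (simp add: algebra_simps)
    finally show ?thesis unfolding cY t_plus_s by (simp add: power2_eq_square)
  qed
  ultimately show ?thesis
    using moments_eq_imp_constant[OF _ _ _ y] finite_P by blast
qed

lemma card_ovoid_diff_ovoid: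
  assumes M: "ovoid P L I M" and M': "ovoid P L I M'" and x: "x \<in> M'" "x \<notin> M"
  shows "s * card (M' - M - {x}) = (t + 1) * t"
proof -
  let ?A = "M' - M - {x}" and ?B = "M \<inter> perp x"
  have xP: "x \<in> P" using x ovoid_subset[OF M'] by blast
  have M'x: "M' \<inter> perp x = {x}" by (rule ovoid_Int_perp_of_mem[OF M' x(1)])
  have "(\<Sum>y\<in>?A. card {a\<in>?B. a \<in> perp y}) = (\<Sum>a\<in>?B. card {y\<in>?A. a \<in> perp y})"
    using finite_ovoid[OF M] finite_ovoid[OF M'] by (intro double_counting) auto
  moreover have "card {a\<in>?B. a \<in> perp y} = s" if y: "y \<in> ?A" for y
  proof -
    have "y \<in> P - M - perp x" using y M'x ovoid_subset[OF M'] by blast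
    then have "card (M \<inter> perp x \<inter> perp y) = s"
      by (rule card_ovoid_Int_perp_perp[OF M xP x(2)])
    moreover have "{a\<in>?B. a \<in> perp y} = M \<inter> perp x \<inter> perp y" by blast
    ultimately show ?thesis by simp
  qed
  moreover have "card {y\<in>?A. a \<in> perp y} = t" if a: "a \<in> ?B" for a
  proof -
    have aP: "a \<in> P" using a ovoid_subset[OF M] by blast
    have "a \<notin> M'" using a M'x x(2) by auto
    have Ma: "M \<inter> perp a = {a}" using ovoid_Int_perp_of_mem[OF M] a by blast
    have "{y\<in>?A. a \<in> perp y} = M' \<inter> perp a - {x}"
    proof
      show "{y\<in>?A. a \<in> perp y} \<subseteq> M' \<inter> perp a - {x}"
      proof
        fix y assume y: "y \<in> {y\<in>?A. a \<in> perp y}"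
        then have "y \<in> P" using ovoid_subset[OF M'] by blast
        with y show "y \<in> M' \<inter> perp a - {x}" using perp_sym[of y a] by blast
      qed
      show "M' \<inter> perp a - {x} \<subseteq> {y\<in>?A. a \<in> perp y}"
      proof
        fix y assume y: "y \<in> M' \<inter> perp a - {x}"
        then have "y \<notin> M" using Ma \<open>a \<notin> M'\<close> by auto
        with y show "y \<in> {y\<in>?A. a \<in> perp y}" using perp_sym[OF aP, of y] by blast
      qed
    qed
    moreover have "x \<in> M' \<inter> perp a" using x(1) a perp_sym[OF xP] by blast
    ultimately show ?thesis
      using card_ovoid_Int_perp[OF M' aP \<open>a \<notin> M'\<close>] finite_ovoid[OF M'] by simp
  qed
  moreover have "card ?B = t + 1" by (rule card_ovoid_Int_perp[OF M xP x(2)])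
  ultimately show ?thesis by (simp add: mult.commute)
qed

lemma card_ovoid_Int_ovoid:
  assumes M: "ovoid P L I M" and M': "ovoid P L I M'" and "M \<noteq> M'"
  shows "card (M \<inter> M') = (s - 1)^2"
proof -
  have "\<not> M' \<subseteq> M"
  proof
    assume "M' \<subseteq> M"
    moreover have "card M' = card M" using card_ovoid[OF M] card_ovoid[OF M'] by simp
    ultimately have "M' = M" by (rule card_subset_eq[OF finite_ovoid[OF M]])
    with \<open>M \<noteq> M'\<close> show False by simp
  qed
  then obtain x where x: "x \<in> M'" "x \<notin> M" by blast
  let ?c = "card (M \<inter> M')" and ?d = "card (M' - M - {x})"
  have "card M' = card (M' \<inter> M) + card (M' - M)"
    by (rule card_Int_Diff[OF finite_ovoid[OF M']])
  moreover have "card (M' - M) = Suc ?d"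
    by (rule card.remove) (use finite_ovoid[OF M'] x in auto)
  ultimately have "?c + ?d = s * t"
    using card_ovoid[OF M'] by (simp add: Int_commute)
  then have "s * ?c + s * ?d = s * (s * t)" by (metis distrib_left)
  then have "s * ?c + (t + 1) * t = s * (s * t)"
    unfolding card_ovoid_diff_ovoid[OF M M' x] .
  then have "int (s * ?c + (t + 1) * t) = int (s * (s * t))" by (rule arg_cong)
  then have "int s * int ?c + (int t + 1) * int t = int s * (int s * int t)"
    by (simp add: algebra_simps)
  moreover have "int t = int s * int s - int s"
    using arg_cong[OF t_plus_s, of int] by simp
  ultimately have "int s * int ?c = int s * (int s - 1)^2"
    by (simp add: algebra_simps power2_eq_square)
  then have "int ?c = (int s - 1)^2" using s_gt_1 by simp
  also have "\<dots> = int ((s - 1)^2)" using s_gt_1 by (simp add: of_nat_diff)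
  finally show ?thesis by (simp only: of_nat_eq_iff)
qed

end

lemma ovoid_image_automorphism:
  assumes aut: "gq_automorphism P L I f g" and W: "ovoid P L I W"
  shows "ovoid P L I (f ` W)"
  unfolding ovoid_def
proof (intro conjI ballI)
  have fP: "f ` P = P" and gL: "g ` L = L"
    and inc: "\<And>p l. p \<in> P \<Longrightarrow> l \<in> L \<Longrightarrow> I (f p) (g l) \<longleftrightarrow> I p l"
    using aut unfolding gq_automorphism_def bij_betw_def by auto
  have WP: "W \<subseteq> P" using W unfolding ovoid_def by blast
  show "f ` W \<subseteq> P" using WP fP by blast
  fix l assume "l \<in> L"
  then obtain l0 where l0: "l0 \<in> L" "l = g l0" using gL by blast
  then obtain a where a: "a \<in> W" "I a l0" and uniq: "\<And>b. b \<in> W \<Longrightarrow> I b l0 \<Longrightarrow> b = a"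
    using W unfolding ovoid_def by blast
  show "\<exists>!p. p \<in> f ` W \<and> I p l"
  proof (rule ex1I[of _ "f a"])
    show "f a \<in> f ` W \<and> I (f a) l" using a l0 inc WP by blast
    show "p = f a" if "p \<in> f ` W \<and> I p l" for p
      using that l0 inc WP uniq by blast
  qed
qed

context gq
begin

definition ovoids :: "'p set set" where
  "ovoids = {W. ovoid P L I W}"

lemma finite_ovoids: "finite ovoids"
  unfolding ovoids_def
  by (rule finite_subset[of _ "Pow P"]) (use ovoid_subset finite_P in auto)

lemma card_ovoids_through_le:
  assumes "point_transitive P L I" "x \<in> P" "y \<in> P"
  shows "card {W\<in>ovoids. x \<in> W} \<le> card {W\<in>ovoids. y \<in> W}"
proof -
  obtain f g where aut: "gq_automorphism P L I f g" and "f x = y"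
    using assms unfolding point_transitive_def by blast
  have "inj_on f P" using aut unfolding gq_automorphism_def bij_betw_def by blast
  then have "inj_on (image f) {W\<in>ovoids. x \<in> W}"
    unfolding ovoids_def by (rule inj_on_image_Pow[THEN inj_on_subset]) (auto dest: ovoid_subset)
  moreover have "image f ` {W\<in>ovoids. x \<in> W} \<subseteq> {W\<in>ovoids. y \<in> W}"
    using ovoid_image_automorphism[OF aut] \<open>f x = y\<close> unfolding ovoids_def by blast
  moreover have "finite {W\<in>ovoids. y \<in> W}" using finite_ovoids by simp
  ultimately show ?thesis by (rule card_inj_on_le)
qed

lemma card_ovoids_through_eq:
  "point_transitive P L I \<Longrightarrow> x \<in> P \<Longrightarrow> y \<in> P \<Longrightarrow>
    card {W\<in>ovoids. x \<in> W} = card {W\<in>ovoids. y \<in> W}"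
  by (intro antisym card_ovoids_through_le)

lemma card_ovoids:
  assumes r: "\<And>x. x \<in> P \<Longrightarrow> card {W\<in>ovoids. x \<in> W} = r"
  shows "card ovoids = (s + 1) * r"
proof -
  have "(\<Sum>W\<in>ovoids. card {x\<in>P. x \<in> W}) = (\<Sum>x\<in>P. card {W\<in>ovoids. x \<in> W})"
    using finite_ovoids finite_P by (rule double_counting)
  moreover have "card {x\<in>P. x \<in> W} = s * t + 1" if "W \<in> ovoids" for W
  proof -
    have "ovoid P L I W" using that unfolding ovoids_def by simp
    then have "{x\<in>P. x \<in> W} = W" using ovoid_subset by blast
    then show ?thesis using card_ovoid[OF \<open>ovoid P L I W\<close>] by simp
  qed
  ultimately have "card ovoids * (s * t + 1) = ((s + 1) * r) * (s * t + 1)"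
    using r card_P by (simp add: algebra_simps)
  then show ?thesis by (subst (asm) mult_right_cancel) simp_all
qed

end

context gq_square
begin

lemma ovoid_incidence_count:
  assumes r: "\<And>x. x \<in> P \<Longrightarrow> card {W\<in>ovoids. x \<in> W} = r" and W0: "ovoid P L I W0"
  shows "(s * t + 1) * r = (s * t + 1) + (card ovoids - 1) * (s - 1)^2"
proof -
  have W0o: "W0 \<in> ovoids" using W0 unfolding ovoids_def by simp
  have "(\<Sum>W\<in>ovoids. card {a\<in>W0. a \<in> W}) = (\<Sum>a\<in>W0. card {W\<in>ovoids. a \<in> W})"
    using finite_ovoids finite_ovoid[OF W0] by (rule double_counting)
  also have "\<dots> = (s * t + 1) * r"
    using r ovoid_subset[OF W0] card_ovoid[OF W0] by (simp add: subset_iff)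
  finally have "(\<Sum>W\<in>ovoids. card (W0 \<inter> W)) = (s * t + 1) * r"
    by (simp add: Int_def)
  moreover have "(\<Sum>W\<in>ovoids. card (W0 \<inter> W))
      = card (W0 \<inter> W0) + (\<Sum>W\<in>ovoids - {W0}. card (W0 \<inter> W))"
    by (rule sum.remove[OF finite_ovoids W0o])
  moreover have "(\<Sum>W\<in>ovoids - {W0}. card (W0 \<inter> W)) = (\<Sum>W\<in>ovoids - {W0}. (s - 1)^2)"
    using card_ovoid_Int_ovoid[OF W0] unfolding ovoids_def by (intro sum.cong) auto
  moreover have "\<dots> = (card ovoids - 1) * (s - 1)^2"
    using finite_ovoids W0o by simp
  ultimately show ?thesis using card_ovoid[OF W0] W0o by simp
qed

lemma ex_noncollinear: "\<exists>x\<in>P. \<exists>y\<in>P. \<not> collinear x y"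
proof -
  obtain x where x: "x \<in> P" using P_nonempty by blast
  have "0 < t" using t_eq s_gt_1 by (simp add: power2_eq_square)
  then have "card (P - perp x) \<noteq> 0" using card_diff_perp[OF x] s_gt_1 by simp
  then obtain y where "y \<in> P - perp x" by (metis card.empty ex_in_conv)
  then show ?thesis using x unfolding perp_def by blast
qed

lemma card_ovoid_Int_perp_perp_noncollinear:
  assumes W: "ovoid P L I W" and xy: "x \<in> P" "y \<in> P" "\<not> collinear x y"
  shows "card (W \<inter> perp x \<inter> perp y) = (if x \<notin> W \<and> y \<notin> W then s else 0)"
proof -
  have "x \<notin> perp y" "y \<notin> perp x" using xy collinear_sym unfolding perp_def by auto
  consider "x \<in> W" | "y \<in> W" | "x \<notin> W" "y \<notin> W" by blast
  then show ?thesis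
  proof cases
    case 1
    then have empty: "W \<inter> perp x \<inter> perp y = {}"
      using ovoid_Int_perp_of_mem[OF W 1] \<open>x \<notin> perp y\<close> by auto
    show ?thesis unfolding empty using 1 by simp
  next
    case 2
    then have empty: "W \<inter> perp x \<inter> perp y = {}"
      using ovoid_Int_perp_of_mem[OF W 2] \<open>y \<notin> perp x\<close> by auto
    show ?thesis unfolding empty using 2 by simp
  next
    case 3
    then show ?thesis
      using card_ovoid_Int_perp_perp[OF W xy(1)] xy(2) \<open>y \<notin> perp x\<close> by simp
  qed
qed

lemma dvd_card_ovoids_through:
  assumes r: "\<And>x. x \<in> P \<Longrightarrow> card {W\<in>ovoids. x \<in> W} = r"
  shows "s dvd (t + 1) * r"
proof -
  obtain x y where xy: "x \<in> P" "y \<in> P" "\<not> collinear x y" using ex_noncollinear by blast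
  let ?C = "perp x \<inter> perp y"
  have "W \<inter> perp x \<inter> perp y = {z\<in>?C. z \<in> W}" for W by blast
  then have "(\<Sum>W\<in>ovoids. card (W \<inter> perp x \<inter> perp y)) = (\<Sum>W\<in>ovoids. card {z\<in>?C. z \<in> W})"
    by (simp only:)
  also have "\<dots> = (\<Sum>z\<in>?C. card {W\<in>ovoids. z \<in> W})"
    using finite_ovoids finite_perp[OF xy(1)] by (intro double_counting) auto
  also have "\<dots> = (t + 1) * r"
    using r card_perp_Int_perp[OF xy] unfolding perp_def by simp
  finally have "(t + 1) * r = (\<Sum>W\<in>ovoids. card (W \<inter> perp x \<inter> perp y))" ..
  also have "\<dots> = (\<Sum>W\<in>ovoids. if x \<notin> W \<and> y \<notin> W then s else 0)"
    using card_ovoid_Int_perp_perp_noncollinear[OF _ xy] unfolding ovoids_def by (intro sum.cong) auto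
  also have "\<dots> = s * card {W\<in>ovoids. x \<notin> W \<and> y \<notin> W}"
    using finite_ovoids by (simp add: sum.If_cases Int_def)
  finally show ?thesis by simp
qed

end

lemma ovoid_count_contradiction:
  fixes s t n r :: nat
  assumes "2 < s" "t = s^2 - s" "n = (s + 1) * r"
    and count: "(s * t + 1) * r = (s * t + 1) + (n - 1) * (s - 1)^2"
    and dvd: "s dvd (t + 1) * r"
  shows False
proof -
  define S R where "S = int s" and "R = int r"
  have "0 < r" using count \<open>n = (s + 1) * r\<close> by (cases r) auto
  then have "1 \<le> n" "1 \<le> s" using assms(1,3) by simp_all
  then have "(int s * int t + 1) * int r = (int s * int t + 1) + (int n - 1) * (int s - 1)^2"
    using arg_cong[OF count, of int]
    by (simp only: of_nat_mult of_nat_add of_nat_1 of_nat_power of_nat_diff)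
  moreover have "int n = (S + 1) * R" unfolding S_def R_def using assms(3) by (simp add: algebra_simps)
  moreover have t: "int t = S^2 - S"
    unfolding S_def using assms(2) by (simp add: of_nat_diff power2_eq_square)
  ultimately have "S * R = S * (S^2 - 2 * S + 2)"
    unfolding S_def R_def by algebra
  then have R: "R = S^2 - 2 * S + 2" using assms(1) unfolding S_def by simp
  have "S dvd (int t + 1) * R"
    using dvd unfolding S_def R_def by (metis of_nat_1 of_nat_add of_nat_dvd_iff of_nat_mult)
  moreover have "(int t + 1) * R = S * (S^3 - 3 * S^2 + 5 * S - 4) + 2"
    unfolding t R by algebra
  ultimately have "S dvd S * (S^3 - 3 * S^2 + 5 * S - 4) + 2" by metis
  then have "S dvd 2" by (simp add: dvd_add_right_iff)
  then show False using assms(1) zdvd_imp_le[of S 2] unfolding S_def by simp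
qed

theorem lemma5p3:
  fixes P :: "'p set" and L :: "'l set" and I :: "'p \<Rightarrow> 'l \<Rightarrow> bool" and q :: nat
  assumes "q > 2"
    and "generalized_quadrangle P L I q (q^2 - q)"
    and "point_transitive P L I"
  shows "\<not> (\<exists>Ov. ovoid P L I Ov)"
proof
  assume "\<exists>Ov. ovoid P L I Ov"
  then obtain W0 where W0: "ovoid P L I W0" ..
  interpret gq_square P L I q "q^2 - q"
    using assms(1,2) by unfold_locales auto
  obtain x0 where "x0 \<in> P" using P_nonempty by blast
  define r where "r = card {W\<in>ovoids. x0 \<in> W}"
  have r: "\<And>x. x \<in> P \<Longrightarrow> card {W\<in>ovoids. x \<in> W} = r"
    unfolding r_def using card_ovoids_through_eq[OF assms(3) _ \<open>x0 \<in> P\<close>] .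
  show False
    using ovoid_count_contradiction[OF assms(1) refl card_ovoids[OF r]
        ovoid_incidence_count[OF r W0] dvd_card_ovoids_through[OF r]] .
qed

end
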